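(* Let $\mathcal{R}$ be a consistent set of probabilistic constraints over $\mathcal{L}$ and $(\mathcal{R}_i)_{i\ge1}$ a sequence of consistent sets of probabilistic constraints over $\mathcal{L}$ such that $\mathrm{Mod}(\mathcal{R}_i)$ converges to $\mathrm{Mod}(\mathcal{R})$ in the Blaschke distance. Then the sequence $(P^{ME}_{\mathcal{R}_i})$ converges to $P^{ME}_{\mathcal{R}}$.
   Context: $\mathcal{L}$ is a propositional language over a finite set of variables; $\mathrm{Int}(\mathcal{L})$ is the set of truth assignments. A probability distribution over $\mathcal{L}$ is $P:\mathrm{Int}(\mathcal{L})\to[0,1]$ summing to $1$, regarded as a vector in $\mathbb{R}^{\mathrm{Int}(\mathcal{L})}$ with the Euclidean norm; $P(\phi)=\sum_{v\models\phi}P(v)$. A probabilistic constraint is $c_0+\sum_{i=1}^k c_i\,\mathsf{p}(\phi_i)\ge 0$ ($c_i\in\mathbb{R}$, $\phi_i\in\mathcal{L}$), satisfied by $P$ iff $c_0+\sum_ic_iP(\phi_i)\ge0$; $\mathrm{Mod}(\mathcal{R})$ is the set of distributions satisfying all constraints of $\mathcal{R}$, and $\mathcal{R}$ is consistent iff it is nonempty; then $P^{ME}_{\mathcal{R}}$ is the unique element of $\mathrm{Mod}(\mathcal{R})$ maximizing $H(P)=-\sum_vP(v)\log P(v)$. The Blaschke distance between convex sets $S_1,S_2$ of distributions is $\inf\{\delta\in\mathbb{R}\mid \forall P_1\in S_1\exists P_2\in S_2: \|P_1-P_2\|\le\delta \text{ and } \forall P_2\in S_2\exists P_1\in S_1:\|P_2-P_1\|\le\delta\}$.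 *)

theory Defs
  imports "HOL-Analysis.Analysis"
begin

datatype 'v form = Var 'v | Top | Bot | Neg "'v form" | Conj "'v form" "'v form"
  | Disj "'v form" "'v form" | Imp "'v form" "'v form"

type_synonym 'v interp = "'v set"

fun models :: "'v interp \<Rightarrow> 'v form \<Rightarrow> bool" where
  "models v (Var x) = (x \<in> v)"
| "models v Top = True"
| "models v Bot = False"
| "models v (Neg f) = (\<not> models v f)"
| "models v (Conj f g) = (models v f \<and> models v g)"
| "models v (Disj f g) = (models v f \<or> models v g)"
| "models v (Imp f g) = (models v f \<longrightarrow> models v g)"

definition is_dist :: "('v::finite interp \<Rightarrow> real) \<Rightarrow> bool" where
  "is_dist P \<longleftrightarrow> (\<forall>v. 0 \<le> P v) \<and> (\<Sum>v\<in>UNIV. P v) = 1"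

definition prob :: "('v::finite interp \<Rightarrow> real) \<Rightarrow> 'v form \<Rightarrow> real" where
  "prob P \<phi> = (\<Sum>v\<in>{v. models v \<phi>}. P v)"

definition enorm :: "('v::finite interp \<Rightarrow> real) \<Rightarrow> real" where
  "enorm P = sqrt (\<Sum>v\<in>UNIV. (P v)\<^sup>2)"

text \<open>A probabilistic constraint c0 + sum_i c_i p(phi_i) >= 0, given as (c0, [(c1,phi1),...,(ck,phik)]).\<close>
type_synonym 'v constr = "real \<times> (real \<times> 'v form) list"

definition satisfies :: "('v::finite interp \<Rightarrow> real) \<Rightarrow> 'v constr \<Rightarrow> bool" where
  "satisfies P c \<longleftrightarrow> fst c + (\<Sum>(ci, \<phi>i) \<leftarrow> snd c. ci * prob P \<phi>i) \<ge> 0"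

definition Mod :: "'v::finite constr set \<Rightarrow> ('v interp \<Rightarrow> real) set" where
  "Mod R = {P. is_dist P \<and> (\<forall>c\<in>R. satisfies P c)}"

definition consistent :: "'v::finite constr set \<Rightarrow> bool" where
  "consistent R \<longleftrightarrow> Mod R \<noteq> {}"

definition entropy :: "('v::finite interp \<Rightarrow> real) \<Rightarrow> real" where
  "entropy P = - (\<Sum>v\<in>UNIV. P v * ln (P v))"

definition ME :: "'v::finite constr set \<Rightarrow> ('v interp \<Rightarrow> real)" where
  "ME R = (THE P. P \<in> Mod R \<and> (\<forall>Q\<in>Mod R. entropy Q \<le> entropy P))"

definition blaschke :: "('v::finite interp \<Rightarrow> real) set \<Rightarrow> ('v interp \<Rightarrow> real) set \<Rightarrow> real" where
  "blaschke S1 S2 = Inf {\<delta>. (\<forall>P1\<in>S1. \<exists>P2\<in>S2. enorm (\<lambda>v. P1 v - P2 v) \<le> \<delta>)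
                          \<and> (\<forall>P2\<in>S2. \<exists>P1\<in>S1. enorm (\<lambda>v. P2 v - P1 v) \<le> \<delta>)}"

end

theory Submission
  imports Defs "HOL-Real_Asymp.Real_Asymp"
begin

text \<open>
  Identify distributions with the points of the standard simplex in \<open>real ^ 'v interp\<close>. There
  entropy is continuous (as \<open>t ln t \<rightarrow> 0\<close> for \<open>t \<rightarrow> 0+\<close>) and strictly concave, and every
  \<open>Mod R\<close> is closed and convex, so \<open>ME R\<close> exists and is the unique entropy maximiser.
  The theorem is then an instance of a stability property of unique maximisers: if \<open>h\<close> is
  continuous on a compact set and \<open>S i\<close> converges to \<open>K\<close> in the Hausdorff sense, then maximisers
  \<open>q i\<close> of \<open>h\<close> on \<open>S i\<close> converge to the maximiser \<open>p\<close> on \<open>K\<close>. Indeed, by compactness \<open>h\<close> is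
  at most \<open>h p - \<eta>\<close> on the points of \<open>K\<close> at distance \<open>\<ge> \<epsilon>\<close> from \<open>p\<close>; since \<open>p\<close> is approximated by
  points of \<open>S i\<close>, uniform continuity eventually gives \<open>h (q i) > h p - \<eta>/2\<close>, so the point of
  \<open>K\<close> close to \<open>q i\<close> must lie within \<open>\<epsilon>\<close> of \<open>p\<close>.
\<close>

lemma unique_maximizer_gap:
  fixes h :: "'a::metric_space \<Rightarrow> real"
  assumes "compact K" "continuous_on K h" "p \<in> K"
    and unique: "\<And>y. y \<in> K \<Longrightarrow> h p \<le> h y \<Longrightarrow> y = p"
    and "r > 0"
  shows "\<exists>\<eta>>0. \<forall>y\<in>K. r \<le> dist y p \<longrightarrow> h y + \<eta> \<le> h p"
proof -
  define C where "C = K \<inter> {y. r \<le> dist y p}"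
  show ?thesis
  proof (cases "C = {}")
    case True
    then show ?thesis by (intro exI[of _ 1]) (auto simp: C_def)
  next
    case False
    have "closed {y. r \<le> dist y p}"
      by (intro closed_Collect_le continuous_on_const continuous_on_dist continuous_on_id)
    then have "compact C"
      unfolding C_def by (rule compact_Int_closed[OF \<open>compact K\<close>])
    moreover have "continuous_on C h"
      using \<open>continuous_on K h\<close> by (rule continuous_on_subset) (simp add: C_def)
    ultimately obtain y0 where "y0 \<in> C" and y0_max: "\<And>y. y \<in> C \<Longrightarrow> h y \<le> h y0"
      using continuous_attains_sup False by metis
    then have "y0 \<in> K" "y0 \<noteq> p"
      using \<open>r > 0\<close> by (auto simp: C_def)
    then have "h y0 < h p"
      using unique by force
    moreover have "\<forall>y\<in>K. r \<le> dist y p \<longrightarrow> h y + (h p - h y0) \<le> h p"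
      using y0_max by (simp add: C_def)
    ultimately show ?thesis
      by (metis diff_gt_0_iff_gt)
  qed
qed

lemma tendsto_maximizers:
  fixes h :: "'a::metric_space \<Rightarrow> real"
  assumes "compact D" "continuous_on D h"
    and "closed K" "K \<subseteq> D" "\<And>i. S i \<subseteq> D"
    and approx: "\<And>e. e > 0 \<Longrightarrow> \<forall>\<^sub>F i in sequentially.
        (\<forall>x\<in>S i. \<exists>y\<in>K. dist x y \<le> e) \<and> (\<forall>y\<in>K. \<exists>x\<in>S i. dist x y \<le> e)"
    and q: "\<And>i. q i \<in> S i" "\<And>i x. x \<in> S i \<Longrightarrow> h x \<le> h (q i)"
    and p: "p \<in> K" "\<And>y. y \<in> K \<Longrightarrow> h p \<le> h y \<Longrightarrow> y = p"
  shows "q \<longlonglongrightarrow> p"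
proof (rule tendstoI)
  fix \<epsilon> :: real
  assume "\<epsilon> > 0"
  have "compact K"
    using \<open>compact D\<close> \<open>closed K\<close> \<open>K \<subseteq> D\<close> by (metis compact_Int_closed inf.absorb2)
  moreover have "continuous_on K h"
    using \<open>continuous_on D h\<close> \<open>K \<subseteq> D\<close> by (rule continuous_on_subset)
  ultimately obtain \<eta> where "\<eta> > 0" and gap: "\<And>y. y \<in> K \<Longrightarrow> \<epsilon>/2 \<le> dist y p \<Longrightarrow> h y + \<eta> \<le> h p"
    using unique_maximizer_gap[of K h p "\<epsilon>/2"] p \<open>\<epsilon> > 0\<close> by auto
  have "uniformly_continuous_on D h"
    using assms(1,2) compact_uniformly_continuous by blast
  moreover have "\<eta>/2 > 0"
    using \<open>\<eta> > 0\<close> by simp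
  ultimately obtain \<delta> where "\<delta> > 0"
    and uc: "\<And>x x'. x \<in> D \<Longrightarrow> x' \<in> D \<Longrightarrow> dist x' x < \<delta> \<Longrightarrow> \<bar>h x' - h x\<bar> < \<eta>/2"
    unfolding uniformly_continuous_on_def dist_real_def by blast
  define e where "e = min (\<delta>/2) (\<epsilon>/2)"
  have "e > 0"
    using \<open>\<delta> > 0\<close> \<open>\<epsilon> > 0\<close> by (simp add: e_def)
  show "\<forall>\<^sub>F i in sequentially. dist (q i) p < \<epsilon>"
    using approx[OF \<open>e > 0\<close>]
  proof eventually_elim
    case (elim i)
    then obtain x y where x: "x \<in> S i" "dist x p \<le> e" and y: "y \<in> K" "dist (q i) y \<le> e"
      using p(1) q(1) by blast
    have "x \<in> D" "y \<in> D" "p \<in> D" "q i \<in> D"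
      using x(1) y(1) p(1) q(1) assms(4,5) by auto
    moreover have "dist x p < \<delta>" "dist (q i) y < \<delta>"
      using x(2) y(2) \<open>\<delta> > 0\<close> by (auto simp: e_def)
    ultimately have "\<bar>h x - h p\<bar> < \<eta>/2" "\<bar>h (q i) - h y\<bar> < \<eta>/2"
      using uc by blast+
    moreover have "h x \<le> h (q i)"
      using q(2) x(1) .
    ultimately have low: "h p - \<eta>/2 < h (q i)" and near: "h (q i) < h y + \<eta>/2"
      by linarith+
    show "dist (q i) p < \<epsilon>"
    proof (rule ccontr)
      assume "\<not> dist (q i) p < \<epsilon>"
      then have "\<epsilon>/2 \<le> dist y p"
        using dist_triangle[of "q i" p y] y(2) by (simp add: e_def dist_commute)
      then show False
        using gap[OF y(1)] low near by simp
    qed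
  qed
qed

lemma xlnx_tendsto_0: "((\<lambda>t::real. t * ln t) \<longlongrightarrow> 0) (at_right 0)"
  by real_asymp

lemma continuous_on_xlnx: "continuous_on {0..} (\<lambda>t::real. t * ln t)"
  unfolding continuous_on_def
proof
  fix x :: real
  assume "x \<in> {0..}"
  show "((\<lambda>t. t * ln t) \<longlongrightarrow> x * ln x) (at x within {0..})"
  proof (cases "x = 0")
    case True
    then show ?thesis
      using xlnx_tendsto_0 by (simp add: at_within_Ici_at_right)
  next
    case False
    with \<open>x \<in> {0..}\<close> have "isCont (\<lambda>t. t * ln t) x"
      by (intro continuous_intros) auto
    then show ?thesis
      using continuous_at_imp_continuous_within continuous_within by blast
  qed
qed

lemma gibbs_ineq_strict:
  fixes a m :: real
  assumes "0 \<le> a" "0 < m" "a \<noteq> m"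
  shows "a - m < a * ln a - a * ln m"
proof (cases "a = 0")
  case False
  with assms have "0 < a" by simp
  then have "a * (ln m - ln a) < a * ((m - a) / a)"
    using ln_diff_less[of m a] assms by (intro mult_strict_left_mono) auto
  also have "\<dots> = m - a"
    using \<open>0 < a\<close> by simp
  finally show ?thesis
    by (simp add: right_diff_distrib)
qed (use assms in simp)

lemma xlnx_midpoint_less:
  fixes a b :: real
  assumes "0 \<le> a" "0 \<le> b" "a \<noteq> b"
  shows "(a + b) * ln ((a + b) / 2) < a * ln a + b * ln b"
proof -
  define m where "m = (a + b) / 2"
  have "0 < m" "a \<noteq> m" "b \<noteq> m"
    using assms by (auto simp: m_def)
  then have "a - m < a * ln a - a * ln m" "b - m < b * ln b - b * ln m"
    using gibbs_ineq_strict assms(1,2) by blast+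
  moreover have "(a + b) * ln ((a + b) / 2) = a * ln m + b * ln m" "(a - m) + (b - m) = 0"
    by (simp_all add: m_def distrib_right)
  ultimately show ?thesis
    by linarith
qed

lemma xlnx_midpoint_le:
  fixes a b :: real
  assumes "0 \<le> a" "0 \<le> b"
  shows "(a + b) * ln ((a + b) / 2) \<le> a * ln a + b * ln b"
  using xlnx_midpoint_less[OF assms] by (cases "a = b") auto

lemma entropy_midpoint_greater:
  assumes "\<And>v. 0 \<le> P v" "\<And>v. 0 \<le> Q v" "P \<noteq> Q"
  shows "(entropy P + entropy Q) / 2 < entropy (\<lambda>v. (P v + Q v) / 2)"
proof -
  obtain w where "P w \<noteq> Q w"
    using \<open>P \<noteq> Q\<close> by auto
  have "(\<Sum>v\<in>UNIV. (P v + Q v) * ln ((P v + Q v) / 2))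
      < (\<Sum>v\<in>UNIV. P v * ln (P v) + Q v * ln (Q v))"
  proof (rule sum_strict_mono_ex1)
    show "\<exists>v\<in>UNIV. (P v + Q v) * ln ((P v + Q v) / 2) < P v * ln (P v) + Q v * ln (Q v)"
      using xlnx_midpoint_less assms(1,2) \<open>P w \<noteq> Q w\<close> by blast
  qed (use xlnx_midpoint_le assms(1,2) in auto)
  then show ?thesis
    unfolding entropy_def by (simp add: sum.distrib sum_divide_distrib[symmetric])
qed

definition constr_weight :: "(real \<times> 'v form) list \<Rightarrow> 'v interp \<Rightarrow> real" where
  "constr_weight l v = (\<Sum>(ci, \<phi>i) \<leftarrow> l. if models v \<phi>i then ci else 0)"

lemma constr_sum_eq_weighted_sum:
  "(\<Sum>(ci, \<phi>i) \<leftarrow> l. ci * prob P \<phi>i) = (\<Sum>v\<in>UNIV. constr_weight l v * P (v::'v::finite interp))"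
proof (induction l)
  case Nil
  then show ?case by (simp add: constr_weight_def)
next
  case (Cons c l)
  obtain a \<phi> where c: "c = (a, \<phi>)"
    by fastforce
  have "a * prob P \<phi> = (\<Sum>v\<in>UNIV. (if models v \<phi> then a else 0) * P v)"
    unfolding prob_def sum_distrib_left by (rule sum.mono_neutral_cong_left) auto
  with Cons.IH show ?case
    by (simp add: c constr_weight_def distrib_right sum.distrib)
qed

lemma satisfies_iff_weighted:
  "satisfies P c \<longleftrightarrow> 0 \<le> fst c + (\<Sum>v\<in>UNIV. constr_weight (snd c) v * P v)"
  by (simp add: satisfies_def constr_sum_eq_weighted_sum)

lemma Mod_convex_comb:
  assumes "P \<in> Mod R" "Q \<in> Mod R" "0 \<le> u" "u \<le> 1"
  shows "(\<lambda>v. u * P v + (1 - u) * Q v) \<in> Mod R"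
proof -
  have linear: "(\<Sum>v\<in>UNIV. w v * (u * P v + t * Q v))
      = u * (\<Sum>v\<in>UNIV. w v * P v) + t * (\<Sum>v\<in>UNIV. w v * Q v)" for w :: "'a interp \<Rightarrow> real" and t
    by (simp add: sum.distrib sum_distrib_left algebra_simps)
  have combine: "c + (\<Sum>v\<in>UNIV. w v * (u * P v + (1 - u) * Q v))
      = u * (c + (\<Sum>v\<in>UNIV. w v * P v)) + (1 - u) * (c + (\<Sum>v\<in>UNIV. w v * Q v))" for c w
    unfolding linear by (simp add: algebra_simps)
  show ?thesis
    using assms
    by (auto simp: Mod_def is_dist_def satisfies_iff_weighted combine sum.distrib
        sum_distrib_left[symmetric] intro!: add_nonneg_nonneg mult_nonneg_nonneg)
qed

lemma dist_eq_enorm: "dist x y = enorm (\<lambda>v. x $ v - y $ v)"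
  for x y :: "real ^ 'v::finite interp"
  by (simp add: enorm_def dist_norm norm_vec_def L2_set_def)

lemma closed_Mod: "closed (vec_nth -` Mod (R :: 'v::finite constr set))"
proof -
  have "vec_nth -` Mod R = (\<Inter>v. {x. 0 \<le> x $ v}) \<inter> {x. (\<Sum>v\<in>UNIV. x $ v) = 1}
      \<inter> (\<Inter>c\<in>R. {x. 0 \<le> fst c + (\<Sum>v\<in>UNIV. constr_weight (snd c) v * x $ v)})"
    by (auto simp: Mod_def is_dist_def satisfies_iff_weighted)
  also have "closed \<dots>"
    by (intro closed_Int closed_INT ballI closed_Collect_le closed_Collect_eq continuous_intros)
  finally show ?thesis .
qed

lemma compact_Mod: "compact (vec_nth -` Mod (R :: 'v::finite constr set))"
proof -
  have "vec_nth -` Mod R \<subseteq> cball 0 1"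
  proof
    fix x :: "real ^ 'v interp"
    assume "x \<in> vec_nth -` Mod R"
    then have "(\<Sum>v\<in>UNIV. \<bar>x $ v\<bar>) = 1"
      by (simp add: Mod_def is_dist_def)
    then show "x \<in> cball 0 1"
      using norm_le_l1_cart[of x] by simp
  qed
  then show ?thesis
    using closed_Mod bounded_cball bounded_subset compact_eq_bounded_closed by metis
qed

lemma continuous_on_entropy:
  "continuous_on {x :: real ^ 'v::finite interp. \<forall>v. 0 \<le> x $ v} (\<lambda>x. entropy (vec_nth x))"
proof -
  have "continuous_on {x :: real ^ 'v interp. \<forall>v. 0 \<le> x $ v} (\<lambda>x. x $ v * ln (x $ v))" for v
    by (rule continuous_on_compose2[OF continuous_on_xlnx continuous_on_component[OF continuous_on_id]]) auto
  then show ?thesis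
    unfolding entropy_def by (intro continuous_on_minus continuous_on_sum)
qed

lemma entropy_maximizer_unique:
  assumes "P \<in> Mod R" "\<forall>Q'\<in>Mod R. entropy Q' \<le> entropy P"
    and "Q \<in> Mod R" "entropy P \<le> entropy Q"
  shows "Q = P"
proof (rule ccontr)
  assume "Q \<noteq> P"
  have "(\<lambda>v. (P v + Q v) / 2) \<in> Mod R"
    using Mod_convex_comb[OF assms(1,3), of "1/2"] by (simp add: add_divide_distrib)
  then have "entropy (\<lambda>v. (P v + Q v) / 2) \<le> entropy P"
    using assms(2) by blast
  moreover have "(entropy P + entropy Q) / 2 < entropy (\<lambda>v. (P v + Q v) / 2)"
    using assms(1,3) \<open>Q \<noteq> P\<close> by (intro entropy_midpoint_greater) (auto simp: Mod_def is_dist_def)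
  ultimately show False
    using assms(4) by simp
qed

lemma entropy_maximizer_exists:
  assumes "consistent R"
  shows "\<exists>P\<in>Mod R. \<forall>Q\<in>Mod R. entropy Q \<le> entropy P"
proof -
  obtain P where "P \<in> Mod R"
    using assms by (auto simp: consistent_def)
  then have "vec_nth -` Mod R \<noteq> {}"
    by (metis vimageI2 vec_lambda_inverse UNIV_I emptyE)
  moreover have "continuous_on (vec_nth -` Mod R) (\<lambda>x. entropy (vec_nth x))"
    by (rule continuous_on_subset[OF continuous_on_entropy]) (auto simp: Mod_def is_dist_def)
  ultimately obtain x where "x \<in> vec_nth -` Mod R" "\<forall>y\<in>vec_nth -` Mod R. entropy (vec_nth y) \<le> entropy (vec_nth x)"
    using continuous_attains_sup[OF compact_Mod] by metis
  then show ?thesis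
    by (metis vec_lambda_inverse UNIV_I vimageE vimageI)
qed

lemma ME_in_Mod: "consistent R \<Longrightarrow> ME R \<in> Mod R"
  and entropy_le_ME: "consistent R \<Longrightarrow> Q \<in> Mod R \<Longrightarrow> entropy Q \<le> entropy (ME R)"
  and ME_unique: "consistent R \<Longrightarrow> Q \<in> Mod R \<Longrightarrow> entropy (ME R) \<le> entropy Q \<Longrightarrow> Q = ME R"
proof -
  assume "consistent R"
  then obtain P where "P \<in> Mod R" "\<forall>Q\<in>Mod R. entropy Q \<le> entropy P"
    using entropy_maximizer_exists by blast
  then have "\<exists>!P. P \<in> Mod R \<and> (\<forall>Q\<in>Mod R. entropy Q \<le> entropy P)"
    using entropy_maximizer_unique by (intro ex1I[of _ P]) auto
  then have ME: "ME R \<in> Mod R \<and> (\<forall>Q\<in>Mod R. entropy Q \<le> entropy (ME R))"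
    unfolding ME_def by (rule theI')
  then show "ME R \<in> Mod R" "Q \<in> Mod R \<Longrightarrow> entropy Q \<le> entropy (ME R)"
    by blast+
  show "Q \<in> Mod R \<Longrightarrow> entropy (ME R) \<le> entropy Q \<Longrightarrow> Q = ME R"
    using ME entropy_maximizer_unique by blast
qed

lemma enorm_diff_le_2:
  assumes "is_dist P" "is_dist Q"
  shows "enorm (\<lambda>v. P v - Q v) \<le> 2"
proof -
  have "enorm (\<lambda>v. P v - Q v) = dist (vec_lambda P) (vec_lambda Q)"
    by (simp add: dist_eq_enorm)
  also have "\<dots> \<le> norm (vec_lambda P) + norm (vec_lambda Q)"
    by (simp add: dist_norm norm_triangle_ineq4)
  also have "\<dots> \<le> 1 + 1"
    using norm_le_l1_cart[of "vec_lambda P"] norm_le_l1_cart[of "vec_lambda Q"] assms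
    by (intro add_mono) (auto simp: is_dist_def)
  finally show ?thesis
    by simp
qed

lemma blaschke_less_imp_approx:
  assumes "A \<noteq> {}" "B \<noteq> {}" "A \<subseteq> Collect is_dist" "B \<subseteq> Collect is_dist" "blaschke A B < e"
  shows "(\<forall>P1\<in>A. \<exists>P2\<in>B. enorm (\<lambda>v. P1 v - P2 v) \<le> e) \<and> (\<forall>P2\<in>B. \<exists>P1\<in>A. enorm (\<lambda>v. P2 v - P1 v) \<le> e)"
proof -
  let ?approx = "\<lambda>\<delta>. (\<forall>P1\<in>A. \<exists>P2\<in>B. enorm (\<lambda>v. P1 v - P2 v) \<le> \<delta>)
      \<and> (\<forall>P2\<in>B. \<exists>P1\<in>A. enorm (\<lambda>v. P2 v - P1 v) \<le> \<delta>)"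
  have "?approx 2"
    using assms(1-4) enorm_diff_le_2 by blast
  then obtain \<delta> where "?approx \<delta>" "\<delta> < e"
    using cInf_lessD[of "Collect ?approx" e] assms(5) unfolding blaschke_def by blast
  then show ?thesis
    by (meson order.trans less_imp_le)
qed

lemma eventually_approx_if_blaschke_tendsto_0:
  fixes R :: "'v::finite constr set"
  assumes "consistent R" "\<And>i. consistent (Rs i)"
    and "(\<lambda>i. blaschke (Mod (Rs i)) (Mod R)) \<longlonglongrightarrow> 0" "e > 0"
  shows "\<forall>\<^sub>F i in sequentially. (\<forall>x\<in>vec_nth -` Mod (Rs i). \<exists>y\<in>vec_nth -` Mod R. dist x y \<le> e)
    \<and> (\<forall>y\<in>vec_nth -` Mod R. \<exists>x\<in>vec_nth -` Mod (Rs i). dist x y \<le> e)"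
  using order_tendstoD(2)[OF assms(3,4)]
proof eventually_elim
  case (elim i)
  have "Mod (Rs i) \<noteq> {}" "Mod R \<noteq> {}"
    using assms(1,2) by (simp_all add: consistent_def)
  moreover have "Mod S \<subseteq> Collect is_dist" for S :: "'v constr set"
    by (auto simp: Mod_def)
  ultimately have approx: "\<forall>P1\<in>Mod (Rs i). \<exists>P2\<in>Mod R. enorm (\<lambda>v. P1 v - P2 v) \<le> e"
      "\<forall>P2\<in>Mod R. \<exists>P1\<in>Mod (Rs i). enorm (\<lambda>v. P2 v - P1 v) \<le> e"
    using blaschke_less_imp_approx[OF _ _ _ _ elim] by simp_all
  show ?case
  proof (intro conjI ballI)
    fix x
    assume "x \<in> vec_nth -` Mod (Rs i)"
    then obtain P where "P \<in> Mod R" "enorm (\<lambda>v. x $ v - P v) \<le> e"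
      using bspec[OF approx(1), of "vec_nth x"] by auto
    then show "\<exists>y\<in>vec_nth -` Mod R. dist x y \<le> e"
      by (intro bexI[of _ "vec_lambda P"]) (simp_all add: dist_eq_enorm vec_lambda_inverse)
  next
    fix y
    assume "y \<in> vec_nth -` Mod R"
    then obtain P where "P \<in> Mod (Rs i)" "enorm (\<lambda>v. y $ v - P v) \<le> e"
      using bspec[OF approx(2), of "vec_nth y"] by auto
    moreover have "dist y (vec_lambda P) \<le> e"
      using \<open>enorm (\<lambda>v. y $ v - P v) \<le> e\<close> by (simp add: dist_eq_enorm)
    ultimately show "\<exists>x\<in>vec_nth -` Mod (Rs i). dist x y \<le> e"
      by (intro bexI[of _ "vec_lambda P"]) (simp_all add: dist_commute vec_lambda_inverse)
  qed
qed

theorem lemma3: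
  fixes R :: "'v::finite constr set" and Rs :: "nat \<Rightarrow> 'v constr set"
  assumes "consistent R"
    and "\<And>i. consistent (Rs i)"
    and "(\<lambda>i. blaschke (Mod (Rs i)) (Mod R)) \<longlonglongrightarrow> 0"
  shows "(\<lambda>i. enorm (\<lambda>v. ME (Rs i) v - ME R v)) \<longlonglongrightarrow> 0"
proof -
  let ?simplex = "vec_nth -` Mod ({} :: 'v constr set)"
  let ?H = "\<lambda>x :: real ^ 'v interp. entropy (vec_nth x)"
  have "continuous_on ?simplex ?H"
    by (rule continuous_on_subset[OF continuous_on_entropy]) (auto simp: Mod_def is_dist_def)
  moreover have "vec_nth -` Mod S \<subseteq> ?simplex" for S :: "'v constr set"
    by (auto simp: Mod_def)
  moreover have "vec_lambda (ME (Rs i)) \<in> vec_nth -` Mod (Rs i)" for i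
    using ME_in_Mod[OF assms(2)] by (simp add: vec_lambda_inverse)
  moreover have "?H x \<le> ?H (vec_lambda (ME (Rs i)))" if "x \<in> vec_nth -` Mod (Rs i)" for i x
    using entropy_le_ME[OF assms(2)] that by (simp add: vec_lambda_inverse)
  moreover have "vec_lambda (ME R) \<in> vec_nth -` Mod R"
    using ME_in_Mod[OF assms(1)] by (simp add: vec_lambda_inverse)
  moreover have "y = vec_lambda (ME R)"
    if "y \<in> vec_nth -` Mod R" "?H (vec_lambda (ME R)) \<le> ?H y" for y
  proof -
    have "vec_nth y = ME R"
      using ME_unique[OF assms(1)] that by (simp add: vec_lambda_inverse)
    then show ?thesis
      using vec_nth_inverse[of y] by simp
  qed
  ultimately have "(\<lambda>i. vec_lambda (ME (Rs i))) \<longlonglongrightarrow> vec_lambda (ME R)"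
    by (intro tendsto_maximizers[OF compact_Mod _ closed_Mod _ _
          eventually_approx_if_blaschke_tendsto_0[OF assms]])
  then have "(\<lambda>i. dist (vec_lambda (ME (Rs i))) (vec_lambda (ME R))) \<longlonglongrightarrow> 0"
    by (rule tendsto_dist_iff[THEN iffD1])
  then show ?thesis
    by (simp add: dist_eq_enorm)
qed

end
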